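(* Let $\mathcal Z$ be a measurable space with probability measure $\eta$, fix $\beta>0$ and $u\in\mathbb S^{d-1}$. For measurable $\Psi:\mathcal Z\to O(d)$ let $h_\Psi((x,z),(y,w)):=\beta^{-1}\exp(\beta\langle x,\Psi(z)\Psi(w)^{\mathsf T}y\rangle)$ and $\mathcal E_\Psi:=\mathcal E^{\rm pr}_{h_\Psi}$. (i) With $x^\Psi(z):=\Psi(z)u$ and $\mu^\ast:=\Gamma_\eta[x^\Psi]$, one has $\mathcal E_\Psi[\mu]\le\mathcal E_\Psi[\mu^\ast]=e^\beta/(2\beta)$ for every $\mu\in\mathcal P_\eta$, so $\mu^\ast$ is a global maximizer on $\mathcal P_\eta$, and $(\pi_x)_{\#}\mu^\ast=(x^\Psi)_{\#}\eta=(\Psi(\cdot)u)_{\#}\eta$. (ii) For every measurable $G:\mathcal Z\to\mathbb S^{d-1}$ there is a measurable $\Psi_G:\mathcal Z\to O(d)$ with $\Psi_G(z)u=G(z)$ for all $z$; consequently $\mu^G:=\Gamma_\eta[G]$ is a global maximizer of $\mathcal E_{\Psi_G}$ on $\mathcal P_\eta$ and its content marginal equals $G_{\#}\eta$. (iii) If $\mathcal Z$ is a standard Borel space and $\eta$ is nonatomic, then for every Borel probability measure $\nu$ on $\mathbb S^{d-1}$ there exist measurable $G:\mathcal Z\to\mathbb S^{d-1}$ and $\Psi_G:\mathcal Z\to O(d)$ as in (ii) such that $(\pi_x)_{\#}\mu^G=G_{\#}\eta=\nu$.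
   Context: $X_{\mathcal Z}:=\mathbb S^{d-1}\times\mathcal Z$. $\mathcal P_\eta:=\{\mu\in\mathcal P(X_{\mathcal Z}):(\pi_{\mathcal Z})_{\#}\mu=\eta\}$; each such $\mu$ is written $\mu(dx,dz)=\mu^z(dx)\eta(dz)$. The prompt energy of a kernel $h$ is $\mathcal E_h^{\rm pr}[\mu]:=\frac12\iint_{\mathcal Z\times\mathcal Z}\iint_{\mathbb S^{d-1}\times\mathbb S^{d-1}}h((x,z),(y,w))\,\mu^z(dx)\mu^w(dy)\eta(dz)\eta(dw)$. For measurable $G:\mathcal Z\to\mathbb S^{d-1}$, $\Gamma_\eta[G]:=(z\mapsto(G(z),z))_{\#}\eta$. $\pi_x,\pi_{\mathcal Z}$ are the coordinate projections; $O(d)$ is the orthogonal group. *)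

theory Defs
  imports "HOL-Probability.Probability"
begin

definition borel_of :: "'a topology \<Rightarrow> 'a measure" where
  "borel_of X = sigma (topspace X) {U. openin X U}"

definition Polish_space :: "'a topology \<Rightarrow> bool" where
  "Polish_space X \<longleftrightarrow> completely_metrizable_space X \<and> separable_space X"

definition standard_borel :: "'a measure \<Rightarrow> bool" where
  "standard_borel M \<longleftrightarrow> (\<exists>X. Polish_space X \<and> topspace X = space M \<and> sets (borel_of X) = sets M)"

definition is_atom :: "'a measure \<Rightarrow> 'a set \<Rightarrow> bool" where
  "is_atom M A \<longleftrightarrow> A \<in> sets M \<and> emeasure M A > 0 \<and>
     (\<forall>B\<in>sets M. B \<subseteq> A \<longrightarrow> emeasure M B = 0 \<or> emeasure M B = emeasure M A)"

definition nonatomic :: "'a measure \<Rightarrow> bool" where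
  "nonatomic M \<longleftrightarrow> (\<nexists>A. is_atom M A)"

definition Sph :: "(real^'n) measure" where
  "Sph = restrict_space borel (sphere 0 1)"

definition XZ :: "'z measure \<Rightarrow> ((real^'n) \<times> 'z) measure" where
  "XZ eta = Sph \<Otimes>\<^sub>M eta"

definition Peta :: "'z measure \<Rightarrow> ((real^'n) \<times> 'z) measure set" where
  "Peta eta = {\<mu>. prob_space \<mu> \<and> sets \<mu> = sets (XZ eta) \<and> distr \<mu> eta snd = eta}"

text \<open>Prompt energy: 1/2 \<integral>\<integral> h d\<mu> d\<mu>; with \<mu>(dx,dz) = \<mu>^z(dx) \<eta>(dz) this is the
  iterated integral against \<mu>^z(dx)\<mu>^w(dy)\<eta>(dz)\<eta>(dw).\<close>
definition prompt_energy ::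
  "(((real^'n) \<times> 'z) \<Rightarrow> ((real^'n) \<times> 'z) \<Rightarrow> real) \<Rightarrow> ((real^'n) \<times> 'z) measure \<Rightarrow> real" where
  "prompt_energy h \<mu> = (1/2) * (\<integral>p. (\<integral>q. h p q \<partial>\<mu>) \<partial>\<mu>)"

definition Gamma :: "'z measure \<Rightarrow> ('z \<Rightarrow> real^'n) \<Rightarrow> ((real^'n) \<times> 'z) measure" where
  "Gamma eta G = distr eta (XZ eta) (\<lambda>z. (G z, z))"

definition hPsi :: "real \<Rightarrow> ('z \<Rightarrow> real^'n^'n) \<Rightarrow> ((real^'n) \<times> 'z) \<Rightarrow> ((real^'n) \<times> 'z) \<Rightarrow> real" where
  "hPsi \<beta> \<Psi> p q = (1/\<beta>) * exp (\<beta> * (fst p \<bullet> ((\<Psi> (snd p) ** transpose (\<Psi> (snd q))) *v fst q)))"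

definition measurable_O :: "'z measure \<Rightarrow> ('z \<Rightarrow> real^'n^'n) \<Rightarrow> bool" where
  "measurable_O eta \<Psi> \<longleftrightarrow> \<Psi> \<in> borel_measurable eta \<and> (\<forall>z\<in>space eta. orthogonal_matrix (\<Psi> z))"

end

theory Submission
  imports Defs
begin

text \<open>
  (i) In the frame coordinates \<open>v = \<Psi>(z)\<^sup>T x\<close> the kernel \<open>h\<^sub>\<Psi>\<close> reads
  \<open>exp (\<beta> \<langle>v, v'\<rangle>) / \<beta>\<close> with unit vectors \<open>v, v'\<close>, so by Cauchy-Schwarz it is at most
  \<open>exp \<beta> / \<beta>\<close>. On the graph of \<open>z \<mapsto> \<Psi>(z) u\<close> every frame coordinate equals \<open>u\<close>, so
  the bound is attained identically there.

  (ii) The Householder reflection exchanging \<open>u\<close> and \<open>G(z)\<close> is orthogonal and depends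
  measurably on \<open>z\<close>.

  (iii) Every Borel probability measure \<open>\<nu>\<close> on a Polish space is the law of a random variable
  on any nonatomic probability space. By inner
  regularity, cut the space into a tree of compact cells, countably many children per cell,
  of diameter at most \<open>2\<^sup>-\<^sup>k\<close> at depth \<open>k\<close>, each cell exhausted by its children up to a
  \<open>\<nu>\<close>-null set. By Sierpinski's theorem, cut the nonatomic space into a tree of events with the
  same index set and the same masses. A point follows the branch of events containing it and is
  sent to the common point of the corresponding nested compact cells. The preimage of a cell is
  then the matching event, and the cells together with the Borel subsets of the \<open>\<nu>\<close>-null set
  missed by the tree form an intersection-stable generator of the Borel sets, so the law is \<open>\<nu>\<close>.
\<close>

section \<open>Exponential kernels in rotated frames\<close>

lemma space_Sph: "space (Sph :: (real^'n) measure) = sphere 0 1"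
  by (simp add: Sph_def space_restrict_space)

lemma space_XZ: "space (XZ eta :: ((real^'n) \<times> 'z) measure) = sphere 0 1 \<times> space eta"
  by (simp add: XZ_def space_pair_measure space_Sph)

lemma measurable_Sph_iff:
  "G \<in> M \<rightarrow>\<^sub>M Sph \<longleftrightarrow> G \<in> borel_measurable M \<and> (\<forall>z\<in>space M. G z \<in> sphere 0 1)"
  unfolding Sph_def measurable_restrict_space2_iff by auto

lemma Sph_sets_iff: "A \<in> sets (Sph :: (real^'n) measure) \<longleftrightarrow> A \<in> sets borel \<and> A \<subseteq> sphere 0 1"
  unfolding Sph_def by (subst sets_restrict_space_iff) auto

lemma norm_orthogonal_matrix_mult:
  fixes A :: "real^'n^'n"
  assumes "orthogonal_matrix A"
  shows "norm (A *v x) = norm x"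
proof -
  have "orthogonal_transformation ((*v) A)"
    using assms by (simp add: orthogonal_transformation_matrix)
  then show ?thesis by (simp add: orthogonal_transformation)
qed

lemma borel_measurable_matrix_vector_mult [measurable]:
  fixes A :: "'a \<Rightarrow> real^'n^'m" and x :: "'a \<Rightarrow> real^'n"
  assumes "A \<in> borel_measurable M" "x \<in> borel_measurable M"
  shows "(\<lambda>z. A z *v x z) \<in> borel_measurable M"
proof -
  have "continuous_on UNIV (\<lambda>p. fst p *v (snd p :: real^'n) :: real^'m)"
    unfolding matrix_vector_mult_def by (intro continuous_intros)
  then show ?thesis
    using borel_measurable_continuous_Pair[OF assms, of "(*v)"] by blast
qed

lemma borel_measurable_transpose [measurable]:
  fixes A :: "'a \<Rightarrow> real^'n^'m"
  assumes "A \<in> borel_measurable M"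
  shows "(\<lambda>z. transpose (A z)) \<in> borel_measurable M"
proof -
  have "continuous_on UNIV (transpose :: real^'n^'m \<Rightarrow> _)"
    unfolding transpose_def by (intro continuous_intros)
  from borel_measurable_continuous_on[OF this assms] show ?thesis .
qed

definition frame_coords :: "('z \<Rightarrow> real^'n^'n) \<Rightarrow> (real^'n) \<times> 'z \<Rightarrow> real^'n" where
  "frame_coords \<Psi> p = transpose (\<Psi> (snd p)) *v fst p"

lemma hPsi_eq_frame_coords:
  "hPsi \<beta> \<Psi> p q = exp (\<beta> * (frame_coords \<Psi> p \<bullet> frame_coords \<Psi> q)) / \<beta>"
proof -
  have "fst p \<bullet> ((\<Psi> (snd p) ** transpose (\<Psi> (snd q))) *v fst q)
      = frame_coords \<Psi> p \<bullet> frame_coords \<Psi> q"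
    by (simp only: frame_coords_def transpose_matrix_vector
        flip: matrix_vector_mul_assoc dot_lmul_matrix)
  then show ?thesis
    by (simp add: hPsi_def)
qed

lemma norm_frame_coords:
  "orthogonal_matrix (\<Psi> (snd p)) \<Longrightarrow> norm (frame_coords \<Psi> p) = norm (fst p)"
  unfolding frame_coords_def by (rule norm_orthogonal_matrix_mult) simp

lemma frame_coords_graph:
  "orthogonal_matrix (\<Psi> z) \<Longrightarrow> frame_coords \<Psi> (\<Psi> z *v u, z) = u"
  by (simp add: frame_coords_def matrix_vector_mul_assoc orthogonal_matrix)

lemma frame_coords_measurable [measurable]:
  assumes "measurable_O eta \<Psi>"
  shows "frame_coords \<Psi> \<in> borel_measurable (XZ eta)"
proof -
  have "\<Psi> \<in> borel_measurable eta" using assms by (simp add: measurable_O_def)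
  moreover have "(\<lambda>x. x) \<in> Sph \<rightarrow>\<^sub>M (borel :: (real^'n) measure)"
    unfolding Sph_def by (rule measurable_restrict_space1) simp
  ultimately show ?thesis
    unfolding frame_coords_def XZ_def by measurable
qed

lemma hPsi_le:
  assumes "\<beta> > 0" "orthogonal_matrix (\<Psi> (snd p))" "orthogonal_matrix (\<Psi> (snd q))"
    "norm (fst p) = 1" "norm (fst q) = 1"
  shows "hPsi \<beta> \<Psi> p q \<le> exp \<beta> / \<beta>"
proof -
  have "frame_coords \<Psi> p \<bullet> frame_coords \<Psi> q \<le> 1"
    using norm_cauchy_schwarz[of "frame_coords \<Psi> p" "frame_coords \<Psi> q"] assms
    by (simp add: norm_frame_coords)
  then show ?thesis
    using assms(1) by (simp add: hPsi_eq_frame_coords divide_right_mono)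
qed

lemma prompt_energy_le:
  assumes "prob_space \<mu>" "0 \<le> c" "\<And>p q. p \<in> space \<mu> \<Longrightarrow> q \<in> space \<mu> \<Longrightarrow> h p q \<le> c"
  shows "prompt_energy h \<mu> \<le> c / 2"
proof -
  interpret prob_space \<mu> by fact
  have integral_le: "(\<integral>x. f x \<partial>\<mu>) \<le> c" if "\<And>x. x \<in> space \<mu> \<Longrightarrow> f x \<le> c" for f
    using that assms(2) integral_le_const[of f c]
    by (cases "integrable \<mu> f") (auto simp: not_integrable_integral_eq)
  have "(\<integral>p. (\<integral>q. h p q \<partial>\<mu>) \<partial>\<mu>) \<le> c"
    by (intro integral_le assms(3))
  then show ?thesis by (simp add: prompt_energy_def)
qed

lemma space_Peta: "\<mu> \<in> Peta eta \<Longrightarrow> space \<mu> = sphere 0 1 \<times> space eta"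
  unfolding Peta_def by (metis (mono_tags) mem_Collect_eq sets_eq_imp_space_eq space_XZ)

lemma prompt_energy_le_Peta:
  assumes "\<mu> \<in> Peta eta" "measurable_O eta \<Psi>" "\<beta> > 0"
  shows "prompt_energy (hPsi \<beta> \<Psi>) \<mu> \<le> exp \<beta> / (2 * \<beta>)"
proof -
  have "prompt_energy (hPsi \<beta> \<Psi>) \<mu> \<le> (exp \<beta> / \<beta>) / 2"
    using assms by (intro prompt_energy_le hPsi_le)
      (auto simp: Peta_def space_Peta measurable_O_def)
  then show ?thesis by simp
qed

lemma measurable_graph:
  "G \<in> eta \<rightarrow>\<^sub>M Sph \<Longrightarrow> (\<lambda>z. (G z, z)) \<in> eta \<rightarrow>\<^sub>M XZ eta"
  unfolding XZ_def by (intro measurable_Pair measurable_ident_sets) auto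

lemma Gamma_in_Peta:
  assumes "prob_space eta" "G \<in> eta \<rightarrow>\<^sub>M Sph"
  shows "Gamma eta G \<in> Peta eta"
proof -
  have "distr (Gamma eta G) eta snd = eta"
    unfolding Gamma_def using measurable_graph[OF assms(2)]
    by (simp add: distr_distr XZ_def comp_def measurable_ident_sets)
  then show ?thesis
    using assms measurable_graph[OF assms(2)]
    by (simp add: Peta_def Gamma_def prob_space.prob_space_distr)
qed

lemma distr_Gamma_fst:
  "G \<in> eta \<rightarrow>\<^sub>M Sph \<Longrightarrow> distr (Gamma eta G) Sph fst = distr eta Sph G"
  unfolding Gamma_def by (subst distr_distr[OF _ measurable_graph]) (auto simp: XZ_def comp_def)

lemma frame_image_measurable:
  assumes "measurable_O eta \<Psi>" "u \<in> sphere 0 1"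
  shows "(\<lambda>z. \<Psi> z *v u) \<in> eta \<rightarrow>\<^sub>M Sph"
  using assms by (auto simp: measurable_Sph_iff measurable_O_def norm_orthogonal_matrix_mult)

lemma prompt_energy_Gamma_frame:
  assumes eta: "prob_space eta" and O: "measurable_O eta \<Psi>" and u: "u \<in> sphere 0 1"
  shows "prompt_energy (hPsi \<beta> \<Psi>) (Gamma eta (\<lambda>z. \<Psi> z *v u)) = exp \<beta> / (2 * \<beta>)"
proof -
  interpret prob_space eta by fact
  let ?G = "\<lambda>z. \<Psi> z *v u"
  let ?k = "\<lambda>p. exp (\<beta> * (frame_coords \<Psi> p \<bullet> u)) / \<beta>"
  note graph = measurable_graph[OF frame_image_measurable[OF O u]]
  have on_graph: "frame_coords \<Psi> (?G z, z) = u" if "z \<in> space eta" for z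
    using O that by (simp add: measurable_O_def frame_coords_graph)
  have inner: "(\<integral>q. hPsi \<beta> \<Psi> p q \<partial>Gamma eta ?G) = ?k p" for p
  proof -
    have "(\<integral>q. hPsi \<beta> \<Psi> p q \<partial>Gamma eta ?G) = (\<integral>z. hPsi \<beta> \<Psi> p (?G z, z) \<partial>eta)"
      unfolding Gamma_def hPsi_eq_frame_coords using O by (intro integral_distr graph) measurable
    also have "\<dots> = (\<integral>z. ?k p \<partial>eta)"
      by (intro Bochner_Integration.integral_cong) (simp_all add: hPsi_eq_frame_coords on_graph inner_commute)
    finally show ?thesis by (simp add: prob_space)
  qed
  have "(\<integral>p. ?k p \<partial>Gamma eta ?G) = (\<integral>z. ?k (?G z, z) \<partial>eta)"
    unfolding Gamma_def using O by (intro integral_distr graph) measurable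
  also have "\<dots> = (\<integral>z. exp \<beta> / \<beta> \<partial>eta)"
    using u by (intro Bochner_Integration.integral_cong) (simp_all add: on_graph inner_commute dot_square_norm)
  finally show ?thesis
    by (simp add: prompt_energy_def inner prob_space)
qed

section \<open>Householder reflections\<close>

text \<open>For \<open>v = 0\<close> the factor \<open>2 / (v \<bullet> v)\<close> is \<open>0\<close>, so \<open>householder 0\<close> is the identity.\<close>

definition householder :: "real^'n \<Rightarrow> real^'n^'n" where
  "householder v = mat 1 - (2 / (v \<bullet> v)) *\<^sub>R (\<chi> i j. v$i * v$j)"

lemma householder_mult: "householder v *v x = x - (2 * (v \<bullet> x) / (v \<bullet> v)) *\<^sub>R v"
proof -
  have "((2 / (v \<bullet> v)) *\<^sub>R (\<chi> i j. v$i * v$j)) *v x = (2 * (v \<bullet> x) / (v \<bullet> v)) *\<^sub>R v"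
    by (simp add: vec_eq_iff matrix_vector_mult_def inner_vec_def sum_distrib_left
        sum_divide_distrib mult_ac)
  then show ?thesis
    by (simp add: householder_def matrix_vector_mult_diff_rdistrib)
qed

lemma orthogonal_matrix_householder: "orthogonal_matrix (householder v)"
proof -
  have "norm (householder v *v x) = norm x" for x
  proof -
    let ?c = "2 * (v \<bullet> x) / (v \<bullet> v)"
    have "(x - ?c *\<^sub>R v) \<bullet> (x - ?c *\<^sub>R v) = x \<bullet> x - 2 * ?c * (v \<bullet> x) + ?c * ?c * (v \<bullet> v)"
      by (simp add: algebra_simps inner_commute)
    also have "\<dots> = x \<bullet> x"
      by (cases "v \<bullet> v = 0") (simp_all add: field_simps)
    finally show ?thesis
      by (simp add: householder_mult norm_eq)
  qed
  then have "orthogonal_transformation ((*v) (householder v))"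
    by (simp add: orthogonal_transformation)
  then show ?thesis
    by (simp add: orthogonal_transformation_matrix)
qed

lemma householder_maps_unit_vectors:
  fixes u g :: "real^'n"
  assumes "norm u = 1" "norm g = 1"
  shows "householder (u - g) *v u = g"
proof (cases "u = g")
  case True
  then show ?thesis by (simp add: householder_mult)
next
  case False
  have "u \<bullet> u = 1" "g \<bullet> g = 1" using assms by (simp_all add: dot_square_norm)
  then have vv: "(u - g) \<bullet> (u - g) = 2 * ((u - g) \<bullet> u)"
    by (simp add: inner_diff inner_commute)
  moreover have "(u - g) \<bullet> (u - g) \<noteq> 0" using False by simp
  ultimately have "(u - g) \<bullet> u \<noteq> 0" by linarith
  then show ?thesis by (simp add: householder_mult vv)
qed

lemma householder_measurable [measurable]: "householder \<in> borel_measurable borel"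
proof (rule borel_measurable_continuous_countable_exceptions[of "{0}"])
  show "continuous_on (- {0}) householder"
    unfolding householder_def by (intro continuous_intros) auto
qed simp

lemma measurable_O_householder_frame:
  assumes "G \<in> eta \<rightarrow>\<^sub>M Sph" "u \<in> sphere 0 1"
  shows "measurable_O eta (\<lambda>z. householder (u - G z))"
    and "z \<in> space eta \<Longrightarrow> householder (u - G z) *v u = G z"
  using assms by (auto simp: measurable_O_def measurable_Sph_iff orthogonal_matrix_householder
      householder_maps_unit_vectors)

section \<open>Nonatomic measures\<close>

lemma exists_ge_half_Sup:
  fixes X :: "real set"
  assumes "0 \<in> X" "bdd_above X"
  shows "\<exists>x\<in>X. Sup X \<le> 2 * x"
proof (cases "Sup X \<le> 0")
  case False
  then have "Sup X / 2 < Sup X" by simp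
  then obtain x where "x \<in> X" "Sup X / 2 < x"
    using less_cSup_iff[of X] assms by blast
  then show ?thesis by (intro bexI[of _ x]) auto
qed (use assms in \<open>auto intro!: bexI[of _ 0]\<close>)

context finite_measure
begin

lemma nonatomic_halve:
  assumes "nonatomic M" "B \<in> sets M" "0 < measure M B"
  shows "\<exists>C\<in>sets M. C \<subseteq> B \<and> 0 < measure M C \<and> measure M C \<le> measure M B / 2"
proof -
  have "\<not> is_atom M B" using assms(1) by (simp add: nonatomic_def)
  then obtain D where D: "D \<in> sets M" "D \<subseteq> B" "measure M D \<noteq> 0" "measure M D \<noteq> measure M B"
    using assms(2,3) by (auto simp: is_atom_def emeasure_eq_measure)
  then have D_pos: "0 < measure M D" "measure M D < measure M B"
    using assms(2) finite_measure_mono[of D B] by (simp_all add: zero_less_measure_iff)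
  show ?thesis
  proof (cases "measure M D \<le> measure M B / 2")
    case False
    have "measure M (B - D) = measure M B - measure M D"
      using D assms(2) by (intro finite_measure_Diff) auto
    moreover have "B - D \<in> sets M" using D(1) assms(2) by blast
    ultimately show ?thesis using False D_pos by (intro bexI[of _ "B - D"]) auto
  qed (use D D_pos in blast)
qed

lemma nonatomic_small_subset:
  assumes "nonatomic M" "A \<in> sets M" "0 < measure M A" "0 < e"
  shows "\<exists>C\<in>sets M. C \<subseteq> A \<and> 0 < measure M C \<and> measure M C < e"
proof -
  have shrink: "\<exists>C\<in>sets M. C \<subseteq> A \<and> 0 < measure M C \<and> measure M C \<le> measure M A / 2^n" for n
  proof (induction n)
    case (Suc n)
    then obtain C where C: "C \<in> sets M" "C \<subseteq> A" "0 < measure M C" "measure M C \<le> measure M A / 2^n"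
      by blast
    obtain D where D: "D \<in> sets M" "D \<subseteq> C" "0 < measure M D" "measure M D \<le> measure M C / 2"
      using nonatomic_halve[OF assms(1) C(1,3)] by blast
    then have "measure M D \<le> measure M A / 2^n / 2"
      using order_trans[OF D(4) divide_right_mono[OF C(4)]] by simp
    then show ?case
      using C D by (intro bexI[of _ D]) auto
  qed (use assms in auto)
  obtain n where "measure M A / e < 2^n"
    using real_arch_pow[of 2 "measure M A / e"] by auto
  then have "measure M A / 2^n < e"
    using assms(4) by (simp add: field_simps)
  moreover obtain C where "C \<in> sets M" "C \<subseteq> A" "0 < measure M C" "measure M C \<le> measure M A / 2^n"
    using shrink[of n] by auto
  ultimately show ?thesis by (intro bexI[of _ C]) auto
qed

lemma greedy_chain:
  assumes A: "A \<in> sets M" and t: "0 \<le> t"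
  obtains B where "incseq B" "\<And>n. B n \<in> sets M" "\<And>n. B n \<subseteq> A" "\<And>n. measure M (B n) \<le> t"
    "\<And>n C. C \<in> sets M \<Longrightarrow> C \<subseteq> A - B n \<Longrightarrow> measure M (B n) + measure M C \<le> t \<Longrightarrow>
       measure M C / 2 \<le> measure M (B (Suc n)) - measure M (B n)"
proof -
  define admissible where
    "admissible S C \<longleftrightarrow> C \<in> sets M \<and> C \<subseteq> A - S \<and> measure M S + measure M C \<le> t" for S C
  define gain where "gain S = Sup {measure M C | C. admissible S C}" for S
  define step where "step S = (SOME C. admissible S C \<and> gain S \<le> 2 * measure M C)" for S
  have bdd: "bdd_above {measure M C | C. admissible S C}" for S
    by (intro bdd_aboveI[of _ "measure M (space M)"]) (auto simp: bounded_measure)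
  have step: "admissible S (step S) \<and> gain S \<le> 2 * measure M (step S)"
    if "S \<in> sets M" "S \<subseteq> A" "measure M S \<le> t" for S
  proof -
    have "0 \<in> {measure M C | C. admissible S C}"
      using that by (auto simp: admissible_def intro!: exI[of _ "{}"])
    then have "\<exists>C. admissible S C \<and> gain S \<le> 2 * measure M C"
      using exists_ge_half_Sup[OF _ bdd] unfolding gain_def by blast
    then show ?thesis
      unfolding step_def by (rule someI_ex)
  qed
  define B where "B = rec_nat {} (\<lambda>_ S. S \<union> step S)"
  have B_Suc: "B (Suc n) = B n \<union> step (B n)" for n by (simp add: B_def)
  have B: "B n \<in> sets M \<and> B n \<subseteq> A \<and> measure M (B n) \<le> t" for n
  proof (induction n)
    case (Suc n)
    then have adm: "admissible (B n) (step (B n))" using step by blast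
    then have "measure M (B (Suc n)) = measure M (B n) + measure M (step (B n))"
      using Suc by (auto simp: B_Suc admissible_def intro!: finite_measure_Union)
    with adm Suc show ?case by (auto simp: B_Suc admissible_def)
  qed (use t in \<open>simp add: B_def\<close>)
  have greedy: "measure M C / 2 \<le> measure M (B (Suc n)) - measure M (B n)"
    if "admissible (B n) C" for n C
  proof -
    have "measure M C \<le> gain (B n)"
      unfolding gain_def using that by (intro cSup_upper[OF _ bdd]) auto
    moreover have "admissible (B n) (step (B n))" "gain (B n) \<le> 2 * measure M (step (B n))"
      using step B by blast+
    moreover have "measure M (B (Suc n)) = measure M (B n) + measure M (step (B n))"
      using calculation(2) B[of n] by (auto simp: B_Suc admissible_def intro!: finite_measure_Union)
    ultimately show ?thesis by linarith
  qed
  show thesis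
  proof (rule that)
    show "incseq B" by (rule incseq_SucI) (simp add: B_Suc)
    show "measure M C / 2 \<le> measure M (B (Suc n)) - measure M (B n)"
      if "C \<in> sets M" "C \<subseteq> A - B n" "measure M (B n) + measure M C \<le> t" for n C
      using that by (intro greedy) (simp add: admissible_def)
  qed (use B in simp_all)
qed

text \<open>Sierpinski's theorem. In a greedy chain the increments tend to zero, while a gap to \<open>t\<close>
  would leave room for one fixed admissible increment at every step.\<close>

lemma nonatomic_intermediate_value:
  assumes na: "nonatomic M" and A: "A \<in> sets M" and t: "0 \<le> t" "t \<le> measure M A"
  shows "\<exists>B\<in>sets M. B \<subseteq> A \<and> measure M B = t"
proof -
  obtain B where inc: "incseq B" and B: "\<And>n. B n \<in> sets M" "\<And>n. B n \<subseteq> A"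
    "\<And>n. measure M (B n) \<le> t"
    and greedy: "\<And>n C. C \<in> sets M \<Longrightarrow> C \<subseteq> A - B n \<Longrightarrow> measure M (B n) + measure M C \<le> t \<Longrightarrow>
       measure M C / 2 \<le> measure M (B (Suc n)) - measure M (B n)"
    by (rule greedy_chain[OF A t(1)]) blast
  let ?U = "\<Union>n. B n"
  have U: "?U \<in> sets M" "?U \<subseteq> A" using B by auto
  have lim: "(\<lambda>n. measure M (B n)) \<longlonglongrightarrow> measure M ?U"
    using B inc by (intro finite_Lim_measure_incseq) auto
  then have increments: "(\<lambda>n. measure M (B (Suc n)) - measure M (B n)) \<longlonglongrightarrow> 0"
    using tendsto_diff[OF LIMSEQ_Suc[OF lim] lim] by simp
  have "measure M ?U \<le> t"
    using B by (intro LIMSEQ_le_const2[OF lim]) auto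
  moreover have "\<not> measure M ?U < t"
  proof
    assume gap: "measure M ?U < t"
    have "measure M (A - ?U) = measure M A - measure M ?U"
      using A U by (intro finite_measure_Diff) auto
    then obtain D where D: "D \<in> sets M" "D \<subseteq> A - ?U" "0 < measure M D" "measure M D < t - measure M ?U"
      using nonatomic_small_subset[OF na, of "A - ?U" "t - measure M ?U"] A U gap t by auto
    have "measure M D / 2 \<le> measure M (B (Suc n)) - measure M (B n)" for n
    proof -
      have "measure M (B n) \<le> measure M ?U"
        using B U by (intro finite_measure_mono) auto
      then have le_t: "measure M (B n) + measure M D \<le> t"
        using D(4) by linarith
      have "D \<subseteq> A - B n" using D(2) by blast
      from greedy[OF D(1) this le_t] show ?thesis .
    qed
    moreover obtain n where "measure M (B (Suc n)) - measure M (B n) < measure M D / 2"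
      using order_tendstoD(2)[OF increments, of "measure M D / 2"] D(3)
      by (auto dest: eventually_happens)
    ultimately show False by (meson not_le)
  qed
  ultimately show ?thesis using U by (intro bexI[of _ ?U]) auto
qed

lemma nonatomic_disjoint_family_measures:
  assumes na: "nonatomic M" and A: "A \<in> sets M"
    and t: "\<And>i. 0 \<le> t i" and sums: "t sums s" and s: "s \<le> measure M A"
  shows "\<exists>C. disjoint_family C \<and> (\<forall>i. C i \<in> sets M \<and> C i \<subseteq> A \<and> measure M (C i) = t i \<and> (t i = 0 \<longrightarrow> C i = {}))"
proof -
  define pick where "pick S x = (if x = 0 then {} else SOME C. C \<in> sets M \<and> C \<subseteq> A - S \<and> measure M C = x)"
    for S x
  have pick: "pick S x \<in> sets M \<and> pick S x \<subseteq> A - S \<and> measure M (pick S x) = x"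
    if "S \<in> sets M" "S \<subseteq> A" "0 \<le> x" "measure M S + x \<le> measure M A" for S x
  proof (cases "x = 0")
    case False
    have "measure M (A - S) = measure M A - measure M S"
      using that A by (intro finite_measure_Diff) auto
    then have "\<exists>C. C \<in> sets M \<and> C \<subseteq> A - S \<and> measure M C = x"
      using nonatomic_intermediate_value[OF na, of "A - S" x] that A by auto
    from someI_ex[OF this] show ?thesis using False by (simp add: pick_def)
  qed (simp add: pick_def)
  define U where "U = rec_nat {} (\<lambda>n S. S \<union> pick S (t n))"
  define C where "C n = pick (U n) (t n)" for n
  have U_Suc: "U (Suc n) = U n \<union> C n" for n by (simp add: U_def C_def)
  have partial_sums: "(\<Sum>j<n. t j) + t n \<le> measure M A" for n
    using sum_le_suminf[OF sums_summable[OF sums], of "{..<Suc n}"] t sums_unique[OF sums] s by simp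
  have U: "U n \<in> sets M \<and> U n \<subseteq> A \<and> measure M (U n) = (\<Sum>j<n. t j)" for n
  proof (induction n)
    case (Suc n)
    then have Cn: "C n \<in> sets M \<and> C n \<subseteq> A - U n \<and> measure M (C n) = t n"
      unfolding C_def using partial_sums[of n] t by (intro pick) auto
    then have "measure M (U n \<union> C n) = measure M (U n) + measure M (C n)"
      using Suc by (intro finite_measure_Union) auto
    with Suc Cn show ?case
      by (auto simp: U_Suc)
  qed (simp add: U_def)
  have C: "C n \<in> sets M \<and> C n \<subseteq> A - U n \<and> measure M (C n) = t n" for n
    unfolding C_def using U[of n] partial_sums[of n] t by (intro pick) auto
  have "incseq U" by (rule incseq_SucI) (simp add: U_Suc)
  have C_sub: "C m \<subseteq> U n" if "m < n" for m n
  proof -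
    have "C m \<subseteq> U (Suc m)" by (simp add: U_Suc)
    also have "\<dots> \<subseteq> U n" using \<open>incseq U\<close> that by (simp add: incseq_def)
    finally show ?thesis .
  qed
  then have "disjoint_family C"
    unfolding disjoint_family_on_def
  proof (intro ballI impI)
    fix m n :: nat assume "m \<noteq> n"
    then consider "m < n" | "n < m" by linarith
    then show "C m \<inter> C n = {}" using C_sub C by cases blast+
  qed
  moreover have "t i = 0 \<Longrightarrow> C i = {}" for i by (simp add: C_def pick_def)
  ultimately show ?thesis using C by blast
qed

lemma nonatomic_partition_measures:
  assumes na: "nonatomic M" and A: "A \<in> sets M" and A_null: "measure M A = 0 \<Longrightarrow> A = {}"
    and t: "\<And>i. 0 \<le> t i" and sums: "t sums measure M A"
  shows "\<exists>B. disjoint_family B \<and> (\<Union>i. B i) = A \<and>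
           (\<forall>i. B i \<in> sets M \<and> measure M (B i) = t i \<and> (t i = 0 \<longrightarrow> B i = {}))"
proof (cases "\<forall>i. t i = 0")
  case True
  then have "t = (\<lambda>_. 0)" by auto
  then have "A = {}" using A_null sums_unique[OF sums] by simp
  with True show ?thesis by (intro exI[of _ "\<lambda>_. {}"]) (simp add: disjoint_family_on_def)
next
  case False
  then obtain i\<^sub>0 where i\<^sub>0: "t i\<^sub>0 \<noteq> 0" by blast
  obtain C where disj: "disjoint_family C"
    and C: "\<And>i. C i \<in> sets M \<and> C i \<subseteq> A \<and> measure M (C i) = t i \<and> (t i = 0 \<longrightarrow> C i = {})"
    using nonatomic_disjoint_family_measures[OF na A t sums order_refl] by blast
  define R where "R = A - (\<Union>i. C i)"
  have R: "R \<in> sets M" "C i \<inter> R = {}" for i using A C by (auto simp: R_def)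
  have "(\<lambda>i. measure M (C i)) sums measure M (\<Union>i. C i)"
    using C disj by (intro finite_measure_UNION) auto
  then have "measure M (\<Union>i. C i) = measure M A"
    using C sums_unique2[OF _ sums] by simp
  then have R_null: "measure M R = 0"
    unfolding R_def using A C by (subst finite_measure_Diff) auto
  define B where "B i = C i \<union> (if i = i\<^sub>0 then R else {})" for i
  have "B i \<inter> B j = {}" if "i \<noteq> j" for i j
    using disj that R(2)[of i] R(2)[of j] by (auto simp: B_def disjoint_family_on_def)
  then have "disjoint_family B"
    by (simp add: disjoint_family_on_def)
  moreover have "(\<Union>i. B i) = A"
    using C unfolding B_def UN_Un_distrib R_def by auto
  moreover have "measure M (B i) = t i" for i
  proof -
    have "measure M (C i \<union> R) = measure M (C i) + measure M R"
      using C R by (intro finite_measure_Union) auto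
    then show ?thesis using C R_null by (cases "i = i\<^sub>0") (simp_all add: B_def)
  qed
  ultimately show ?thesis
    using C R i\<^sub>0 by (intro exI[of _ B]) (auto simp: B_def)
qed

end

section \<open>Compact exhaustion of finite Borel measures\<close>

lemma borel_partition_small_diameter:
  assumes "0 < e"
  shows "\<exists>P::nat \<Rightarrow> 'a::polish_space set. disjoint_family P \<and> (\<Union>i. P i) = UNIV \<and>
           (\<forall>i. P i \<in> sets borel \<and> (\<forall>x\<in>P i. \<forall>y\<in>P i. dist x y \<le> e))"
proof -
  obtain X :: "'a set" where X: "countable X" "\<And>U. open U \<Longrightarrow> U \<noteq> {} \<Longrightarrow> \<exists>y\<in>X. y \<in> U"
    using countable_dense_exists by blast
  define C where "C i = cball (from_nat_into X i) (e / 2)" for i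
  have "(\<Union>i. C i) = UNIV"
  proof (intro set_eqI iffI UNIV_I)
    fix y :: 'a
    obtain d where "d \<in> X" "dist y d < e / 2" using X(2)[of "ball y (e / 2)"] assms by auto
    then have "y \<in> C (to_nat_on X d)"
      using X(1) by (simp add: C_def dist_commute)
    then show "y \<in> (\<Union>i. C i)" by blast
  qed
  moreover have "x \<in> C i \<Longrightarrow> y \<in> C i \<Longrightarrow> dist x y \<le> e" for x y i
    using dist_triangle2[of x y "from_nat_into X i"] by (simp add: C_def dist_commute)
  moreover have "range (disjointed C) \<subseteq> sets borel"
    by (rule sets.range_disjointed_sets) (auto simp: C_def)
  ultimately show ?thesis
    by (intro exI[of _ "disjointed C"])
      (auto simp: disjoint_family_disjointed UN_disjointed_eq dest!: disjointed_subset[THEN subsetD])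
qed

lemma compact_subset_measure_close:
  fixes N :: "'a::polish_space measure"
  assumes "finite_measure N" "sets N = sets borel" "D \<in> sets borel" "0 < e"
  shows "\<exists>K. compact K \<and> K \<subseteq> D \<and> measure N (D - K) < e"
proof (cases "measure N D < e")
  case False
  interpret finite_measure N by fact
  have "ennreal (measure N D - e) < emeasure N D"
    using False assms(4) by (simp add: emeasure_eq_measure ennreal_lessI)
  also have "emeasure N D = (SUP K \<in> {K. K \<subseteq> D \<and> compact K}. emeasure N K)"
    using assms(2,3) by (intro inner_regular) simp_all
  finally obtain K where K: "K \<subseteq> D" "compact K" "ennreal (measure N D - e) < emeasure N K"
    by (auto simp: less_SUP_iff)
  have "K \<in> sets N" using K(2) assms(2) by (simp add: borel_compact)
  moreover have "measure N D - e < measure N K"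
    using K(3) False by (simp add: emeasure_eq_measure ennreal_less_iff)
  moreover have "measure N (D - K) = measure N D - measure N K"
    using assms(2,3) K(1) \<open>K \<in> sets N\<close> by (intro finite_measure_Diff) auto
  ultimately show ?thesis using K by (intro exI[of _ K]) auto
qed (intro exI[of _ "{}"], auto)

lemma disjoint_compact_exhaustion:
  fixes N :: "'a::polish_space measure"
  assumes fin: "finite_measure N" and sb: "sets N = sets borel" and D: "D \<in> sets borel"
  shows "\<exists>K::nat \<Rightarrow> 'a set. disjoint_family K \<and> (\<forall>i. compact (K i) \<and> K i \<subseteq> D) \<and>
           D - (\<Union>i. K i) \<in> null_sets N"
proof -
  interpret finite_measure N by fact
  define approx where
    "approx W n = (SOME K. compact K \<and> K \<subseteq> D - W \<and> measure N (D - W - K) < 1 / Suc n)" for W n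
  have approx: "compact (approx W n) \<and> approx W n \<subseteq> D - W \<and> measure N (D - W - approx W n) < 1 / Suc n"
    if "W \<in> sets borel" for W n
    unfolding approx_def
    by (rule someI_ex, rule compact_subset_measure_close[OF fin sb]) (use D that in auto)
  define W where "W = rec_nat {} (\<lambda>n W. W \<union> approx W n)"
  define K where "K n = approx (W n) n" for n
  have W_eq: "W n = (\<Union>m<n. K m)" for n
    by (induction n) (simp_all add: W_def K_def lessThan_Suc Un_commute)
  have W_borel: "W n \<in> sets borel" for n
  proof (induction n)
    case (Suc n)
    then have "K n \<in> sets borel" using approx by (simp add: K_def borel_compact)
    with Suc show ?case by (simp add: W_def K_def sets.Un)
  qed (simp add: W_def)
  have K: "compact (K n) \<and> K n \<subseteq> D - W n \<and> measure N (D - W n - K n) < 1 / Suc n" for n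
    unfolding K_def using W_borel by (rule approx)
  have "disjoint_family K"
    unfolding disjoint_family_on_def
  proof (intro ballI impI)
    fix m n :: nat assume "m \<noteq> n"
    then consider "m < n" | "n < m" by linarith
    then show "K m \<inter> K n = {}"
      using K[of m] K[of n] W_eq[of m] W_eq[of n] by cases auto
  qed
  moreover have "D - (\<Union>i. K i) \<in> null_sets N"
  proof -
    have R: "D - (\<Union>i. K i) \<in> sets N"
      using D K sb by (auto intro: borel_compact)
    have "measure N (D - (\<Union>i. K i)) \<le> 1 / Suc n" for n
    proof -
      have "D - W n - K n \<in> sets N"
        using D W_borel[of n] K[of n] sb by (auto intro!: sets.Diff simp: borel_compact)
      then have "measure N (D - (\<Union>i. K i)) \<le> measure N (D - W n - K n)"
        by (intro finite_measure_mono) (auto simp: W_eq)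
      then show ?thesis using K[of n] by simp
    qed
    then have "measure N (D - (\<Union>i. K i)) \<le> 0"
      by (intro LIMSEQ_le_const[OF LIMSEQ_inverse_real_of_nat]) (auto simp: inverse_eq_divide)
    then show ?thesis
      using R by (auto simp: null_sets_def emeasure_eq_measure measure_le_0_iff)
  qed
  ultimately show ?thesis using K by blast
qed

lemma disjoint_family_prod_decode:
  assumes P: "disjoint_family P" and K: "\<And>i. disjoint_family (K i)" "\<And>i j. K i j \<subseteq> P i"
  shows "disjoint_family (\<lambda>n. case_prod K (prod_decode n))"
  unfolding disjoint_family_on_def
proof (intro ballI impI)
  fix m n :: nat assume "m \<noteq> n"
  obtain i j i' j' where mn: "prod_decode m = (i, j)" "prod_decode n = (i', j')"
    by (metis surj_pair)
  then have "(i, j) \<noteq> (i', j')" using \<open>m \<noteq> n\<close> by (metis inj_prod_decode injD)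
  have "K i j \<inter> K i' j' = {}"
  proof (cases "i = i'")
    case True
    with \<open>(i, j) \<noteq> (i', j')\<close> show ?thesis using disjoint_family_onD[OF K(1)] by auto
  next
    case False
    then have "P i \<inter> P i' = {}" using disjoint_family_onD[OF P] by auto
    then show ?thesis using K(2)[of i j] K(2)[of i' j'] by blast
  qed
  then show "case_prod K (prod_decode m) \<inter> case_prod K (prod_decode n) = {}" by (simp add: mn)
qed

lemma small_disjoint_compact_exhaustion:
  fixes N :: "'a::polish_space measure"
  assumes fin: "finite_measure N" and sb: "sets N = sets borel" and D: "D \<in> sets borel" and e: "0 < e"
  shows "\<exists>L::nat \<Rightarrow> 'a set. disjoint_family L \<and>
           (\<forall>n. compact (L n) \<and> L n \<subseteq> D \<and> (\<forall>x\<in>L n. \<forall>y\<in>L n. dist x y \<le> e)) \<and>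
           D - (\<Union>n. L n) \<in> null_sets N"
proof -
  obtain P :: "nat \<Rightarrow> 'a set" where P: "disjoint_family P" "\<And>i. P i \<in> sets borel"
    "\<And>i x y. x \<in> P i \<Longrightarrow> y \<in> P i \<Longrightarrow> dist x y \<le> e" "(\<Union>i. P i) = UNIV"
    using borel_partition_small_diameter[OF e] by metis
  have "\<exists>K::nat \<Rightarrow> 'a set. disjoint_family K \<and> (\<forall>j. compact (K j) \<and> K j \<subseteq> D \<inter> P i) \<and>
          D \<inter> P i - (\<Union>j. K j) \<in> null_sets N" for i
    using disjoint_compact_exhaustion[OF fin sb, of "D \<inter> P i"] D P(2) by blast
  then obtain K :: "nat \<Rightarrow> nat \<Rightarrow> 'a set" where K: "\<And>i. disjoint_family (K i)"
    "\<And>i j. compact (K i j)" "\<And>i j. K i j \<subseteq> D \<inter> P i" "\<And>i. D \<inter> P i - (\<Union>j. K i j) \<in> null_sets N"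
    by metis
  define L where "L n = case_prod K (prod_decode n)" for n
  have L_cover: "(\<Union>n. L n) = (\<Union>i j. K i j)"
    unfolding L_def by (auto split: prod.splits) (metis prod_encode_inverse case_prod_conv)
  have "disjoint_family L"
    unfolding L_def using P(1) K(1) by (rule disjoint_family_prod_decode) (use K(3) in blast)
  moreover have "compact (L n) \<and> L n \<subseteq> D \<and> (\<forall>x\<in>L n. \<forall>y\<in>L n. dist x y \<le> e)" for n
  proof -
    obtain i j where "prod_decode n = (i, j)" by (metis surj_pair)
    then show ?thesis using K(2,3)[of i j] P(3)[of _ i] by (auto simp: L_def)
  qed
  moreover have "D - (\<Union>n. L n) \<in> null_sets N"
  proof (rule null_sets_subset)
    show "(\<Union>i. D \<inter> P i - (\<Union>j. K i j)) \<in> null_sets N"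
      using K(4) by (rule null_sets_UN)
    have "L n \<in> sets borel" for n
      using K(2) by (simp add: L_def borel_compact split: prod.splits)
    then show "D - (\<Union>n. L n) \<in> sets N"
      using D sb by auto
    have "\<exists>i. x \<in> P i" for x using P(4) by blast
    then show "D - (\<Union>n. L n) \<subseteq> (\<Union>i. D \<inter> P i - (\<Union>j. K i j))"
      by (auto simp: L_cover)
  qed
  ultimately show ?thesis by blast
qed

section \<open>Borel laws on nonatomic probability spaces\<close>

lemma tree_family_drop:
  assumes "\<And>i xs. F (i # xs) \<subseteq> F xs"
  shows "F xs \<subseteq> F (drop k xs)"
proof (induction xs arbitrary: k)
  case (Cons i xs)
  then show ?case using assms[of i xs] by (cases k) auto
qed simp

lemma tree_family_disjoint:
  assumes sub: "\<And>i xs. F (i # xs) \<subseteq> F xs" and disj: "\<And>xs. disjoint_family (\<lambda>i. F (i # xs))"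
  shows "length xs = length ys \<Longrightarrow> xs \<noteq> ys \<Longrightarrow> F xs \<inter> F ys = {}"
proof (induction xs arbitrary: ys)
  case (Cons i xs)
  then obtain j ys' where ys: "ys = j # ys'" by (cases ys) auto
  show ?case
  proof (cases "xs = ys'")
    case True
    with Cons.prems ys show ?thesis using disjoint_family_onD[OF disj] by auto
  next
    case False
    with Cons ys have "F xs \<inter> F ys' = {}" by simp
    with ys show ?thesis using sub[of i xs] sub[of j ys'] by blast
  qed
qed simp

lemma tree_family_Int:
  assumes sub: "\<And>i xs. F (i # xs) \<subseteq> F xs" and disj: "\<And>xs. disjoint_family (\<lambda>i. F (i # xs))"
  shows "F xs \<inter> F ys = {} \<or> F xs \<subseteq> F ys \<or> F ys \<subseteq> F xs"
proof -
  have *: "F xs \<inter> F ys = {} \<or> F ys \<subseteq> F xs" if "length xs \<le> length ys" for xs ys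
  proof (cases "drop (length ys - length xs) ys = xs")
    case True
    then show ?thesis using tree_family_drop[OF sub, of ys "length ys - length xs"] by simp
  next
    case False
    with that have "F xs \<inter> F (drop (length ys - length xs) ys) = {}"
      by (intro tree_family_disjoint[OF sub disj]) auto
    then show ?thesis using tree_family_drop[OF sub, of ys] by blast
  qed
  show ?thesis
    using *[of xs ys] *[of ys xs] by (cases "length xs \<le> length ys") auto
qed

lemma inverse_two_power_Suc_less:
  assumes "0 < r"
  obtains k where "1 / 2 ^ Suc k < (r::real)"
proof -
  obtain k where "(1 / 2) ^ k < r"
    using real_arch_pow_inv[OF assms, of "1 / 2"] by auto
  moreover have "(1 / 2 :: real) ^ Suc k \<le> (1 / 2) ^ k"
    by (rule power_decreasing) auto
  ultimately show thesis
    using that[of k] unfolding power_one_over by linarith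
qed

locale borel_cells =
  fixes N :: "'a::polish_space measure" and S :: "'a set"
  assumes finite_N: "finite_measure N" and sets_N: "sets N = sets borel" and S_borel: "S \<in> sets borel"
begin

definition subcells :: "'a set \<Rightarrow> nat \<Rightarrow> nat \<Rightarrow> 'a set" where
  "subcells D k = (SOME K. disjoint_family K \<and>
     (\<forall>i. compact (K i) \<and> K i \<subseteq> D \<and> (\<forall>x\<in>K i. \<forall>y\<in>K i. dist x y \<le> 1 / 2^k)) \<and>
     D - (\<Union>i. K i) \<in> null_sets N)"

lemma subcells_spec:
  assumes "D \<in> sets borel"
  shows "disjoint_family (subcells D k) \<and>
     (\<forall>i. compact (subcells D k i) \<and> subcells D k i \<subseteq> D \<and>
          (\<forall>x\<in>subcells D k i. \<forall>y\<in>subcells D k i. dist x y \<le> 1 / 2^k)) \<and>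
     D - (\<Union>i. subcells D k i) \<in> null_sets N"
proof -
  have "\<exists>K::nat \<Rightarrow> 'a set. disjoint_family K \<and>
     (\<forall>i. compact (K i) \<and> K i \<subseteq> D \<and> (\<forall>x\<in>K i. \<forall>y\<in>K i. dist x y \<le> 1 / 2^k)) \<and>
     D - (\<Union>i. K i) \<in> null_sets N"
    using small_disjoint_compact_exhaustion[OF finite_N sets_N assms, of "1 / 2^k"] by simp
  then show ?thesis
    unfolding subcells_def by (rule someI_ex)
qed

primrec cell :: "nat list \<Rightarrow> 'a set" where
  "cell [] = S"
| "cell (i # xs) = subcells (cell xs) (Suc (length xs)) i"

declare cell.simps(2) [simp del]

lemma cell_borel: "cell xs \<in> sets borel"
proof (induction xs)
  case (Cons i xs)
  then show ?case using subcells_spec[OF Cons] by (simp add: cell.simps(2) borel_compact)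
qed (simp add: S_borel)

lemma compact_cell_Cons: "compact (cell (i # xs))"
  using subcells_spec[OF cell_borel[of xs], of "Suc (length xs)"] by (simp add: cell.simps(2))

lemma cell_Cons_subset: "cell (i # xs) \<subseteq> cell xs"
  using subcells_spec[OF cell_borel[of xs], of "Suc (length xs)"] by (simp add: cell.simps(2))

lemma disjoint_family_cell_Cons: "disjoint_family (\<lambda>i. cell (i # xs))"
  using subcells_spec[OF cell_borel[of xs], of "Suc (length xs)"] by (simp add: cell.simps(2))

lemma cell_minus_Cons_null: "cell xs - (\<Union>i. cell (i # xs)) \<in> null_sets N"
  using subcells_spec[OF cell_borel[of xs], of "Suc (length xs)"] by (simp add: cell.simps(2))

lemma dist_cell_Cons:
  "x \<in> cell (i # xs) \<Longrightarrow> y \<in> cell (i # xs) \<Longrightarrow> dist x y \<le> 1 / 2^length (i # xs)"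
  using subcells_spec[OF cell_borel[of xs], of "Suc (length xs)"] by (simp add: cell.simps(2))

lemma cell_subset: "cell xs \<subseteq> S"
  by (induction xs) (use cell_Cons_subset in auto)

lemma cell_Int: "cell xs \<inter> cell ys = {} \<or> cell xs \<subseteq> cell ys \<or> cell ys \<subseteq> cell xs"
  by (rule tree_family_Int[OF cell_Cons_subset disjoint_family_cell_Cons])

lemma cell_sums: "(\<lambda>i. measure N (cell (i # xs))) sums measure N (cell xs)"
proof -
  interpret finite_measure N by (rule finite_N)
  let ?U = "\<Union>i. cell (i # xs)"
  have U: "?U \<in> sets N" using cell_borel sets_N by auto
  have sums: "(\<lambda>i. measure N (cell (i # xs))) sums measure N ?U"
    using cell_borel disjoint_family_cell_Cons sets_N by (intro finite_measure_UNION) auto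
  have "cell xs = ?U \<union> (cell xs - ?U)"
    using cell_Cons_subset by blast
  then have "measure N (cell xs) = measure N (?U \<union> (cell xs - ?U))"
    by (rule arg_cong)
  also have "\<dots> = measure N ?U"
    using U cell_minus_Cons_null by (rule measure_Un_null_set)
  finally show ?thesis using sums by simp
qed

definition level :: "nat \<Rightarrow> 'a set" where
  "level k = (\<Union>xs\<in>{xs. length xs = k}. cell xs)"

lemma level_borel: "level k \<in> sets borel"
  unfolding level_def by (intro sets.countable_UN'') (auto simp: cell_borel)

lemma level_0: "level 0 = S"
  by (simp add: level_def)

lemma S_minus_level_null: "S - level k \<in> null_sets N"
proof (induction k)
  case 0
  then show ?case by (simp add: level_0)
next
  case (Suc k)
  have sub: "S - level (Suc k) \<subseteq> (S - level k) \<union> (\<Union>xs\<in>{xs. length xs = k}. cell xs - (\<Union>i. cell (i # xs)))"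
  proof
    fix x assume x: "x \<in> S - level (Suc k)"
    show "x \<in> (S - level k) \<union> (\<Union>xs\<in>{xs. length xs = k}. cell xs - (\<Union>i. cell (i # xs)))"
    proof (cases "x \<in> level k")
      case True
      then obtain xs where xs: "length xs = k" "x \<in> cell xs" by (auto simp: level_def)
      moreover have "cell (i # xs) \<subseteq> level (Suc k)" for i
        unfolding level_def using xs(1) by (intro UN_upper) simp
      ultimately show ?thesis using x by blast
    qed (use x in auto)
  qed
  have "(\<Union>xs\<in>{xs. length xs = k}. cell xs - (\<Union>i. cell (i # xs))) \<in> null_sets N"
    by (intro null_sets_UN') (auto simp: cell_minus_Cons_null)
  with Suc have "(S - level k) \<union> (\<Union>xs\<in>{xs. length xs = k}. cell xs - (\<Union>i. cell (i # xs))) \<in> null_sets N"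
    by (rule null_sets.Un)
  moreover have "S - level (Suc k) \<in> sets N"
    using S_borel level_borel sets_N by auto
  ultimately show ?case
    using sub by (rule null_sets_subset)
qed

definition uncovered :: "'a set" where
  "uncovered = - (\<Inter>k. level k)"

lemma uncovered_borel: "uncovered \<in> sets borel"
  unfolding uncovered_def using level_borel by (auto intro!: borel_comp)


lemma open_subset_cells:
  assumes "open U"
  shows "U \<subseteq> \<Union> (cell ` {xs. cell xs \<subseteq> U}) \<union> (U \<inter> uncovered)"
proof
  fix x assume x: "x \<in> U"
  show "x \<in> \<Union> (cell ` {xs. cell xs \<subseteq> U}) \<union> (U \<inter> uncovered)"
  proof (cases "x \<in> uncovered")
    case False
    obtain r where r: "0 < r" "ball x r \<subseteq> U"
      using assms x open_contains_ball by blast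
    obtain k where k: "1 / 2 ^ Suc k < r"
      using r(1) by (rule inverse_two_power_Suc_less)
    from False have "x \<in> level (Suc k)" by (auto simp: uncovered_def)
    then obtain i xs where x_cell: "x \<in> cell (i # xs)" and len: "length xs = k"
      by (auto simp: level_def length_Suc_conv)
    have "cell (i # xs) \<subseteq> ball x r"
    proof
      fix y assume "y \<in> cell (i # xs)"
      then have "dist x y \<le> 1 / 2 ^ Suc k"
        using dist_cell_Cons[OF x_cell] len by simp
      then show "y \<in> ball x r" using k by simp
    qed
    with r(2) x_cell show ?thesis by blast
  qed (use x in simp)
qed

definition cell_generator :: "'a set set" where
  "cell_generator = range cell \<union> {B \<in> sets borel. B \<subseteq> uncovered}"

lemma cell_generator_subset_borel: "cell_generator \<subseteq> sets borel"
  by (auto simp: cell_generator_def cell_borel)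

lemma Int_stable_cell_generator: "Int_stable cell_generator"
proof (rule Int_stableI)
  fix a b assume ab: "a \<in> cell_generator" "b \<in> cell_generator"
  show "a \<inter> b \<in> cell_generator"
  proof (cases "a \<in> range cell \<and> b \<in> range cell")
    case True
    then obtain xs ys where "a = cell xs" "b = cell ys" by blast
    then consider "a \<inter> b = {}" | "a \<inter> b = a" | "a \<inter> b = b"
      using cell_Int[of xs ys] by blast
    then show ?thesis using ab by cases (auto simp: cell_generator_def)
  next
    case False
    then have "a \<inter> b \<subseteq> uncovered" using ab by (auto simp: cell_generator_def)
    moreover have "a \<inter> b \<in> sets borel" using ab cell_generator_subset_borel by blast
    ultimately show ?thesis by (simp add: cell_generator_def)
  qed
qed

lemma sets_borel_eq_sigma_cell_generator: "sets borel = sigma_sets UNIV cell_generator"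
proof
  show "sigma_sets UNIV cell_generator \<subseteq> sets borel"
    using sets.sigma_sets_subset[OF cell_generator_subset_borel] by simp
  have "U \<in> sigma_sets UNIV cell_generator" if "open U" for U
  proof -
    have U: "U = \<Union> (cell ` {xs. cell xs \<subseteq> U}) \<union> (U \<inter> uncovered)"
      using open_subset_cells[OF that] by blast
    have "\<Union> (cell ` {xs. cell xs \<subseteq> U}) \<in> sigma_sets UNIV cell_generator"
      by (intro sigma_sets_UNION) (auto simp: cell_generator_def)
    moreover have "U \<inter> uncovered \<in> sigma_sets UNIV cell_generator"
      using that uncovered_borel by (auto simp: cell_generator_def)
    ultimately show ?thesis by (subst U) (rule sigma_sets_Un)
  qed
  then show "sets borel \<subseteq> sigma_sets UNIV cell_generator"
    unfolding sets_borel by (intro sigma_sets_mono) auto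
qed

end

locale matched_cells = borel_cells N S
  for N :: "'a::polish_space measure" and S :: "'a set" +
  fixes eta :: "'z measure"
  assumes prob_eta: "prob_space eta" and nonatomic_eta: "nonatomic eta"
    and prob_N: "prob_space N" and N_S: "emeasure N S = 1"
begin

text \<open>Pieces of mass zero are taken empty, so that every point of \<open>eta\<close> lies on a branch of
  nonempty cells.\<close>

definition matched_split :: "'z set \<Rightarrow> (nat \<Rightarrow> real) \<Rightarrow> nat \<Rightarrow> 'z set" where
  "matched_split A t = (SOME B. disjoint_family B \<and> (\<Union>i. B i) = A \<and>
     (\<forall>i. B i \<in> sets eta \<and> measure eta (B i) = t i \<and> (t i = 0 \<longrightarrow> B i = {})))"

lemma matched_split_spec:
  assumes "A \<in> sets eta" "measure eta A = 0 \<Longrightarrow> A = {}" "\<And>i. 0 \<le> t i" "t sums measure eta A"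
  shows "disjoint_family (matched_split A t) \<and> (\<Union>i. matched_split A t i) = A \<and>
    (\<forall>i. matched_split A t i \<in> sets eta \<and> measure eta (matched_split A t i) = t i \<and>
         (t i = 0 \<longrightarrow> matched_split A t i = {}))"
proof -
  interpret eta: prob_space eta by (rule prob_eta)
  have "\<exists>B. disjoint_family B \<and> (\<Union>i. B i) = A \<and>
     (\<forall>i. B i \<in> sets eta \<and> measure eta (B i) = t i \<and> (t i = 0 \<longrightarrow> B i = {}))"
    by (rule eta.nonatomic_partition_measures[OF nonatomic_eta assms])
  then show ?thesis
    unfolding matched_split_def by (rule someI_ex)
qed

primrec base_cell :: "nat list \<Rightarrow> 'z set" where
  "base_cell [] = space eta"
| "base_cell (i # xs) = matched_split (base_cell xs) (\<lambda>j. measure N (cell (j # xs))) i"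

declare base_cell.simps(2) [simp del]

lemma split_base_cell:
  assumes "base_cell xs \<in> sets eta" "measure eta (base_cell xs) = measure N (cell xs)"
    "measure eta (base_cell xs) = 0 \<Longrightarrow> base_cell xs = {}"
  shows "disjoint_family (\<lambda>i. base_cell (i # xs)) \<and> (\<Union>i. base_cell (i # xs)) = base_cell xs \<and>
    (\<forall>i. base_cell (i # xs) \<in> sets eta \<and> measure eta (base_cell (i # xs)) = measure N (cell (i # xs)) \<and>
         (measure N (cell (i # xs)) = 0 \<longrightarrow> base_cell (i # xs) = {}))"
  unfolding base_cell.simps(2)
  using assms cell_sums[of xs] by (intro matched_split_spec) simp_all

lemma base_cell_measure:
  "base_cell xs \<in> sets eta \<and> measure eta (base_cell xs) = measure N (cell xs) \<and>
   (measure eta (base_cell xs) = 0 \<longrightarrow> base_cell xs = {})"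
proof (induction xs)
  case Nil
  interpret eta: prob_space eta by (rule prob_eta)
  have "measure N S = 1" using N_S by (simp add: measure_def)
  then show ?case by (simp add: eta.prob_space)
next
  case (Cons i xs)
  then show ?case using split_base_cell[of xs] by auto
qed

lemma base_cell_sets: "base_cell xs \<in> sets eta"
  using base_cell_measure by blast

lemma measure_base_cell: "measure eta (base_cell xs) = measure N (cell xs)"
  using base_cell_measure by blast

lemma base_cell_Cons:
  "disjoint_family (\<lambda>i. base_cell (i # xs)) \<and> (\<Union>i. base_cell (i # xs)) = base_cell xs"
  using split_base_cell[of xs] base_cell_measure[of xs] by blast

lemma base_cell_Cons_subset: "base_cell (i # xs) \<subseteq> base_cell xs"
  using base_cell_Cons[of xs] by blast

lemma disjoint_family_base_cell_Cons: "disjoint_family (\<lambda>i. base_cell (i # xs))"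
  using base_cell_Cons[of xs] by blast

lemma cell_nonempty: "z \<in> base_cell xs \<Longrightarrow> cell xs \<noteq> {}"
  using base_cell_measure[of xs] by auto

primrec path :: "'z \<Rightarrow> nat \<Rightarrow> nat list" where
  "path z 0 = []"
| "path z (Suc k) = (SOME i. z \<in> base_cell (i # path z k)) # path z k"

lemma base_cell_path: "z \<in> space eta \<Longrightarrow> z \<in> base_cell (path z k) \<and> length (path z k) = k"
proof (induction k)
  case (Suc k)
  then have "\<exists>i. z \<in> base_cell (i # path z k)"
    using base_cell_Cons[of "path z k"] by blast
  then have "z \<in> base_cell ((SOME i. z \<in> base_cell (i # path z k)) # path z k)"
    by (rule someI_ex)
  with Suc show ?case by simp
qed simp

lemma base_cell_iff_path: "z \<in> base_cell xs \<longleftrightarrow> z \<in> space eta \<and> path z (length xs) = xs"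
proof
  assume z: "z \<in> base_cell xs"
  then have "z \<in> space eta" using base_cell_sets sets.sets_into_space by blast
  moreover have "path z (length xs) = xs"
  proof (rule ccontr)
    assume "path z (length xs) \<noteq> xs"
    then have "base_cell (path z (length xs)) \<inter> base_cell xs = {}"
      using base_cell_path[OF \<open>z \<in> space eta\<close>]
      by (intro tree_family_disjoint[OF base_cell_Cons_subset disjoint_family_base_cell_Cons]) auto
    with z base_cell_path[OF \<open>z \<in> space eta\<close>] show False by blast
  qed
  ultimately show "z \<in> space eta \<and> path z (length xs) = xs" by blast
qed (use base_cell_path in metis)


definition limit_point :: "'z \<Rightarrow> 'a" where
  "limit_point z = (SOME x. \<forall>k. x \<in> cell (path z k))"

lemma limit_point_in_cell: "z \<in> space eta \<Longrightarrow> limit_point z \<in> cell (path z k)"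
proof -
  assume z: "z \<in> space eta"
  let ?C = "\<lambda>n. cell (path z (Suc n))"
  have "decseq ?C"
    by (intro decseq_SucI) (simp add: cell_Cons_subset)
  moreover have "closed (?C n)" for n
    by (simp add: compact_cell_Cons compact_imp_closed)
  moreover have "?C n \<noteq> {}" for n
    using cell_nonempty base_cell_path[OF z] by blast
  moreover have "\<exists>n. \<forall>x\<in>?C n. \<forall>y\<in>?C n. dist x y < e" if e: "0 < e" for e
  proof -
    obtain n where n: "1 / 2 ^ Suc n < e"
      using e by (rule inverse_two_power_Suc_less)
    obtain i ys where p: "path z (Suc n) = i # ys" and len: "length ys = n"
      using base_cell_path[OF z, of n] by simp
    have "dist x y \<le> 1 / 2 ^ Suc n" if "x \<in> ?C n" "y \<in> ?C n" for x y
    proof -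
      from that have "x \<in> cell (i # ys)" "y \<in> cell (i # ys)" unfolding p .
      from dist_cell_Cons[OF this] show ?thesis using len by simp
    qed
    with n show ?thesis by force
  qed
  ultimately obtain a where a: "\<And>n. a \<in> ?C n"
    using decreasing_closed_nest[of ?C] unfolding decseq_def by blast
  have "a \<in> cell (path z k)" for k
  proof (cases k)
    case 0
    then show ?thesis using a[of 0] cell_subset by auto
  qed (use a in simp)
  then have "\<forall>k. limit_point z \<in> cell (path z k)"
    unfolding limit_point_def by (intro someI[where P = "\<lambda>x. \<forall>k. x \<in> cell (path z k)"] allI)
  then show ?thesis by blast
qed

lemma limit_point_in_S: "z \<in> space eta \<Longrightarrow> limit_point z \<in> S"
  using limit_point_in_cell[of z 0] by simp

lemma vimage_limit_point_cell: "limit_point -` cell xs \<inter> space eta = base_cell xs"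
proof (intro set_eqI iffI)
  fix z assume z: "z \<in> limit_point -` cell xs \<inter> space eta"
  then have "limit_point z \<in> cell xs \<inter> cell (path z (length xs))"
    using limit_point_in_cell by blast
  moreover have "length (path z (length xs)) = length xs"
    using z base_cell_path by blast
  ultimately have "path z (length xs) = xs"
    using tree_family_disjoint[OF cell_Cons_subset disjoint_family_cell_Cons, of xs "path z (length xs)"]
    by (metis empty_iff)
  with z show "z \<in> base_cell xs" by (simp add: base_cell_iff_path)
next
  fix z assume "z \<in> base_cell xs"
  then show "z \<in> limit_point -` cell xs \<inter> space eta"
    using limit_point_in_cell by (metis IntI base_cell_iff_path vimageI)
qed

lemma limit_point_not_uncovered: "z \<in> space eta \<Longrightarrow> limit_point z \<notin> uncovered"
  unfolding uncovered_def level_def using limit_point_in_cell base_cell_path by blast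

lemma uncovered_null: "uncovered \<in> null_sets N"
proof -
  interpret N: prob_space N by (rule prob_N)
  have "space N = UNIV"
    using sets_eq_imp_space_eq[OF sets_N] by simp
  then have "- S \<in> null_sets N"
    using N_S S_borel sets_N N.emeasure_space_1 emeasure_compl[of S N]
    by (auto simp: null_sets_def Compl_eq_Diff_UNIV)
  moreover have "(\<Union>k. S - level k) \<in> null_sets N"
    using S_minus_level_null by (rule null_sets_UN)
  ultimately have "- S \<union> (\<Union>k. S - level k) \<in> null_sets N"
    by (rule null_sets.Un)
  moreover have "uncovered = - S \<union> (\<Union>k. S - level k)"
    by (auto simp: uncovered_def) (metis level_0)
  ultimately show ?thesis by simp
qed

lemma limit_point_measurable: "limit_point \<in> borel_measurable eta"
proof (rule measurable_sigma_sets[OF sets_borel_eq_sigma_cell_generator])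
  fix B assume "B \<in> cell_generator"
  then consider xs where "B = cell xs" | "B \<subseteq> uncovered"
    by (auto simp: cell_generator_def)
  then show "limit_point -` B \<inter> space eta \<in> sets eta"
  proof cases
    case 2
    then have "limit_point -` B \<inter> space eta = {}"
      using limit_point_not_uncovered by blast
    then show ?thesis by simp
  qed (simp add: vimage_limit_point_cell base_cell_sets)
qed auto

lemma distr_limit_point: "distr eta borel limit_point = N"
proof (rule measure_eqI_generator_eq_countable[OF Int_stable_cell_generator])
  interpret eta: prob_space eta by (rule prob_eta)
  interpret N: prob_space N by (rule prob_N)
  have emeasure_distr_eq: "emeasure (distr eta borel limit_point) B = emeasure eta (limit_point -` B \<inter> space eta)"
    if "B \<in> sets borel" for B
    using limit_point_measurable that by (rule emeasure_distr)
  fix B assume "B \<in> cell_generator"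
  then consider xs where "B = cell xs" | "B \<in> sets borel" "B \<subseteq> uncovered"
    by (auto simp: cell_generator_def)
  then show "emeasure (distr eta borel limit_point) B = emeasure N B"
  proof cases
    case 1
    then show ?thesis
      by (simp add: emeasure_distr_eq cell_borel vimage_limit_point_cell eta.emeasure_eq_measure
          N.emeasure_eq_measure measure_base_cell)
  next
    case 2
    then have "limit_point -` B \<inter> space eta = {}"
      using limit_point_not_uncovered by blast
    moreover have "B \<in> null_sets N"
      using 2 uncovered_null sets_N by (auto intro: null_sets_subset)
    ultimately show ?thesis using 2 by (simp add: emeasure_distr_eq null_setsD1)
  qed
next
  have "(\<Inter>k. level k) \<subseteq> S"
    using INT_lower[of 0 UNIV level] by (simp add: level_0)
  then have "- S \<subseteq> uncovered" by (auto simp: uncovered_def)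
  then show "{S, - S} \<subseteq> cell_generator"
    using S_borel by (auto simp: cell_generator_def intro: range_eqI[of _ _ "[]"])
next
  have "finite_measure (distr eta borel limit_point)"
    using prob_space.prob_space_distr[OF prob_eta limit_point_measurable] by (rule prob_space.finite_measure)
  then show "emeasure (distr eta borel limit_point) a \<noteq> \<infinity>" if "a \<in> {S, - S}" for a
    using finite_measure.emeasure_finite by auto
qed (auto simp: sets_N sets_borel_eq_sigma_cell_generator cell_generator_subset_borel)

end

theorem nonatomic_realizes_distribution:
  fixes N :: "'a::polish_space measure" and eta :: "'z measure"
  assumes "prob_space eta" "nonatomic eta" "prob_space N" "sets N = sets borel"
    "S \<in> sets borel" "emeasure N S = 1"
  shows "\<exists>G\<in>borel_measurable eta. (\<forall>z\<in>space eta. G z \<in> S) \<and> distr eta borel G = N"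
proof -
  interpret matched_cells N S eta
    by (intro matched_cells.intro borel_cells.intro matched_cells_axioms.intro)
      (simp_all add: assms prob_space.finite_measure)
  show ?thesis
    using limit_point_measurable limit_point_in_S distr_limit_point by blast
qed

lemma nonatomic_realizes_Sph_distribution:
  fixes \<nu> :: "(real^'n) measure"
  assumes eta: "prob_space eta" "nonatomic eta" and \<nu>: "prob_space \<nu>" "sets \<nu> = sets Sph"
  shows "\<exists>G\<in>eta \<rightarrow>\<^sub>M Sph. distr eta Sph G = \<nu>"
proof -
  have space_\<nu>: "space \<nu> = sphere 0 1"
    using sets_eq_imp_space_eq[OF \<nu>(2)] by (simp add: space_Sph)
  have id_measurable: "(\<lambda>x. x) \<in> \<nu> \<rightarrow>\<^sub>M borel"
    using \<nu>(2) by (auto simp: measurable_def space_\<nu> Sph_sets_iff)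
  define N where "N = distr \<nu> borel (\<lambda>x. x)"
  have emeasure_N: "emeasure N A = emeasure \<nu> A" if "A \<in> sets borel" "A \<subseteq> sphere 0 1" for A
    using that emeasure_distr[OF id_measurable, of A] by (simp add: N_def space_\<nu> Int_absorb2)
  have "emeasure N (sphere 0 1) = 1"
    using emeasure_N[of "sphere 0 1"] prob_space.emeasure_space_1[OF \<nu>(1)] by (simp add: space_\<nu>)
  moreover have "prob_space N"
    unfolding N_def using \<nu>(1) id_measurable by (rule prob_space.prob_space_distr)
  ultimately obtain G where G: "G \<in> borel_measurable eta" "\<And>z. z \<in> space eta \<Longrightarrow> G z \<in> sphere 0 1"
    and distr_G: "distr eta borel G = N"
    using nonatomic_realizes_distribution[OF eta, of N "sphere 0 1"] by (auto simp: N_def)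
  have G_Sph: "G \<in> eta \<rightarrow>\<^sub>M Sph"
    using G by (simp add: measurable_Sph_iff)
  have "distr eta Sph G = \<nu>"
  proof (rule measure_eqI)
    fix A assume "A \<in> sets (distr eta Sph G)"
    then have A: "A \<in> sets borel" "A \<subseteq> sphere 0 1" by (simp_all add: Sph_sets_iff)
    have "emeasure (distr eta Sph G) A = emeasure (distr eta borel G) A"
      using A by (simp add: emeasure_distr G_Sph G(1) Sph_sets_iff)
    also have "\<dots> = emeasure \<nu> A"
      using A by (simp add: distr_G emeasure_N)
    finally show "emeasure (distr eta Sph G) A = emeasure \<nu> A" .
  qed (simp add: \<nu>(2))
  with G_Sph show ?thesis by blast
qed

section \<open>Maximizers of the prompt energy\<close>

lemma frame_graph_maximizer:
  assumes eta: "prob_space eta" and beta: "\<beta> > 0" and u: "u \<in> sphere 0 1" and O: "measurable_O eta \<Psi>"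
  shows "Gamma eta (\<lambda>z. \<Psi> z *v u) \<in> Peta eta \<and>
       (\<forall>\<mu>\<in>Peta eta. prompt_energy (hPsi \<beta> \<Psi>) \<mu>
           \<le> prompt_energy (hPsi \<beta> \<Psi>) (Gamma eta (\<lambda>z. \<Psi> z *v u))) \<and>
       prompt_energy (hPsi \<beta> \<Psi>) (Gamma eta (\<lambda>z. \<Psi> z *v u)) = exp \<beta> / (2 * \<beta>) \<and>
       distr (Gamma eta (\<lambda>z. \<Psi> z *v u)) Sph fst = distr eta Sph (\<lambda>z. \<Psi> z *v u)"
  using Gamma_in_Peta[OF eta frame_image_measurable[OF O u]] prompt_energy_Gamma_frame[OF eta O u]
    prompt_energy_le_Peta[OF _ O beta] distr_Gamma_fst[OF frame_image_measurable[OF O u]]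
  by simp

lemma graph_maximizer:
  assumes eta: "prob_space eta" and beta: "\<beta> > 0" and u: "u \<in> sphere 0 1" and G: "G \<in> eta \<rightarrow>\<^sub>M Sph"
  shows "\<exists>\<Psi>. measurable_O eta \<Psi> \<and> (\<forall>z\<in>space eta. \<Psi> z *v u = G z) \<and>
       Gamma eta G \<in> Peta eta \<and>
       (\<forall>\<mu>\<in>Peta eta. prompt_energy (hPsi \<beta> \<Psi>) \<mu> \<le> prompt_energy (hPsi \<beta> \<Psi>) (Gamma eta G)) \<and>
       distr (Gamma eta G) Sph fst = distr eta Sph G"
proof (intro exI conjI ballI)
  let ?\<Psi> = "\<lambda>z. householder (u - G z)"
  show O: "measurable_O eta ?\<Psi>" and frame: "\<And>z. z \<in> space eta \<Longrightarrow> ?\<Psi> z *v u = G z"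
    using measurable_O_householder_frame[OF G u] by blast+
  have Gamma_eq: "Gamma eta G = Gamma eta (\<lambda>z. ?\<Psi> z *v u)"
    unfolding Gamma_def by (intro distr_cong) (simp_all add: frame)
  show "Gamma eta G \<in> Peta eta" "distr (Gamma eta G) Sph fst = distr eta Sph G"
    using Gamma_in_Peta[OF eta G] distr_Gamma_fst[OF G] by simp_all
  show "prompt_energy (hPsi \<beta> ?\<Psi>) \<mu> \<le> prompt_energy (hPsi \<beta> ?\<Psi>) (Gamma eta G)"
    if "\<mu> \<in> Peta eta" for \<mu>
    using prompt_energy_le_Peta[OF that O beta] prompt_energy_Gamma_frame[OF eta O u] Gamma_eq
    by simp
qed

lemma nonatomic_graph_maximizer:
  fixes \<nu> :: "(real^'n) measure"
  assumes eta: "prob_space eta" and beta: "\<beta> > 0" and u: "u \<in> sphere 0 1"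
    and "nonatomic eta" "prob_space \<nu>" "sets \<nu> = sets Sph"
  shows "\<exists>G\<in>eta \<rightarrow>\<^sub>M Sph. \<exists>\<Psi>. measurable_O eta \<Psi> \<and> (\<forall>z\<in>space eta. \<Psi> z *v u = G z) \<and>
       Gamma eta G \<in> Peta eta \<and>
       (\<forall>\<mu>\<in>Peta eta. prompt_energy (hPsi \<beta> \<Psi>) \<mu> \<le> prompt_energy (hPsi \<beta> \<Psi>) (Gamma eta G)) \<and>
       distr (Gamma eta G) Sph fst = distr eta Sph G \<and> distr eta Sph G = \<nu>"
proof -
  obtain G where "G \<in> eta \<rightarrow>\<^sub>M Sph" "distr eta Sph G = \<nu>"
    using nonatomic_realizes_Sph_distribution[OF eta assms(4-6)] by blast
  with graph_maximizer[OF eta beta u, of G] show ?thesis by blast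
qed

theorem theorem4p1:
  fixes eta :: "'z measure" and \<beta> :: real and u :: "real^'n"
  assumes eta: "prob_space eta" and beta: "\<beta> > 0" and u: "u \<in> sphere 0 1"
  shows
   "(\<forall>\<Psi>. measurable_O eta \<Psi> \<longrightarrow>
       Gamma eta (\<lambda>z. \<Psi> z *v u) \<in> Peta eta \<and>
       (\<forall>\<mu>\<in>Peta eta. prompt_energy (hPsi \<beta> \<Psi>) \<mu>
           \<le> prompt_energy (hPsi \<beta> \<Psi>) (Gamma eta (\<lambda>z. \<Psi> z *v u))) \<and>
       prompt_energy (hPsi \<beta> \<Psi>) (Gamma eta (\<lambda>z. \<Psi> z *v u)) = exp \<beta> / (2 * \<beta>) \<and>
       distr (Gamma eta (\<lambda>z. \<Psi> z *v u)) Sph fst = distr eta Sph (\<lambda>z. \<Psi> z *v u))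
  \<and> (\<forall>G \<in> eta \<rightarrow>\<^sub>M Sph. \<exists>\<Psi>G. measurable_O eta \<Psi>G \<and> (\<forall>z\<in>space eta. \<Psi>G z *v u = G z) \<and>
       Gamma eta G \<in> Peta eta \<and>
       (\<forall>\<mu>\<in>Peta eta. prompt_energy (hPsi \<beta> \<Psi>G) \<mu> \<le> prompt_energy (hPsi \<beta> \<Psi>G) (Gamma eta G)) \<and>
       distr (Gamma eta G) Sph fst = distr eta Sph G)
  \<and> (standard_borel eta \<and> nonatomic eta \<longrightarrow>
       (\<forall>\<nu>. prob_space \<nu> \<and> sets \<nu> = sets (Sph :: (real^'n) measure) \<longrightarrow>
         (\<exists>G \<in> eta \<rightarrow>\<^sub>M Sph. \<exists>\<Psi>G. measurable_O eta \<Psi>G \<and> (\<forall>z\<in>space eta. \<Psi>G z *v u = G z) \<and>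
            Gamma eta G \<in> Peta eta \<and>
            (\<forall>\<mu>\<in>Peta eta. prompt_energy (hPsi \<beta> \<Psi>G) \<mu> \<le> prompt_energy (hPsi \<beta> \<Psi>G) (Gamma eta G)) \<and>
            distr (Gamma eta G) Sph fst = distr eta Sph G \<and>
            distr eta Sph G = \<nu>)))"
  using frame_graph_maximizer[OF eta beta u] graph_maximizer[OF eta beta u]
    nonatomic_graph_maximizer[OF eta beta u]
  by blast

end
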